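(* Let $p>0$, let $f$ be a $p$-knowable Boolean function, and let $q>0$ with $pq>1$. Then for every integer $n\ge1$, $$\sum_{k>n}I_k(f)^q\le\mathbb E[(\max W(f))^p]^q\,\frac{n^{1-pq}}{pq-1}.$$ In particular, if $f$ is $p$-knowable for some $p>\tfrac12$, then $H(f)=\sum_k I_k(f)^2<\infty$.
   Context: Let $\Omega=\{-1,1\}$ and $\Omega^\infty=\{-1,1\}^{\mathbb N}$ with the uniform product probability measure; $\omega$ denotes a uniformly random element. A Boolean function is a measurable map $f:\Omega^\infty\to\Omega$. $\omega^{(k)}$ is $\omega$ with bit $k$ flipped; $I_k(f)=\mathbb P(f(\omega^{(k)})\ne f(\omega))$, $H(f)=\sum_kI_k(f)^2$. A set $W\subseteq\mathbb N$ is a witness set for $f$ at $\omega$ if there is an event $A$ with $\mathbb P(A)=1$ such that for all $\tilde\omega\in A$: if $\tilde\omega_i=\omega_i$ for all $i\in W$ then $f(\tilde\omega)=f(\omega)$. $f$ is finitary if almost surely a finite witness set exists; then $W(f)(\omega)$ denotes the least finite witness set in the order: smaller maximum first, then smaller cardinality, then lexicographic. $f$ is $p$-knowable if it is finitary and $\mathbb E[(\max W(f))^p]<\infty$. *)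

theory Defs
  imports "HOL-Probability.Probability"
begin

definition Omega :: "(nat \<Rightarrow> int) measure" where
  "Omega = PiM UNIV (\<lambda>_. measure_pmf (pmf_of_set {-1::int, 1}))"

definition boolean_function :: "((nat \<Rightarrow> int) \<Rightarrow> int) \<Rightarrow> bool" where
  "boolean_function f \<longleftrightarrow>
     f \<in> measurable Omega (count_space UNIV) \<and> (\<forall>w\<in>space Omega. f w \<in> {-1, 1})"

definition flip_bit :: "nat \<Rightarrow> (nat \<Rightarrow> int) \<Rightarrow> (nat \<Rightarrow> int)" where
  "flip_bit k w = w(k := - (w k))"

definition influence :: "((nat \<Rightarrow> int) \<Rightarrow> int) \<Rightarrow> nat \<Rightarrow> real" where
  "influence f k = measure Omega {w \<in> space Omega. f (flip_bit k w) \<noteq> f w}"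

definition total_sq_influence :: "((nat \<Rightarrow> int) \<Rightarrow> int) \<Rightarrow> real" where
  "total_sq_influence f = (\<Sum>k. (influence f k)\<^sup>2)"

definition witness_set :: "((nat \<Rightarrow> int) \<Rightarrow> int) \<Rightarrow> (nat \<Rightarrow> int) \<Rightarrow> nat set \<Rightarrow> bool" where
  "witness_set f w W \<longleftrightarrow>
     (\<exists>A\<in>sets Omega. measure Omega A = 1 \<and>
        (\<forall>w'\<in>A. (\<forall>i\<in>W. w' i = w i) \<longrightarrow> f w' = f w))"

definition finitary :: "((nat \<Rightarrow> int) \<Rightarrow> int) \<Rightarrow> bool" where
  "finitary f \<longleftrightarrow> (AE w in Omega. \<exists>W. finite W \<and> witness_set f w W)"

definition setmax :: "nat set \<Rightarrow> nat" where
  "setmax W = (if W = {} then 0 else Max W)"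

definition wit_less :: "nat set \<Rightarrow> nat set \<Rightarrow> bool" where
  "wit_less V W \<longleftrightarrow>
     setmax V < setmax W \<or>
     (setmax V = setmax W \<and>
       (card V < card W \<or>
        (card V = card W \<and>
          (sorted_list_of_set V, sorted_list_of_set W) \<in> lexord {(x, y). x < y})))"

definition least_witness :: "((nat \<Rightarrow> int) \<Rightarrow> int) \<Rightarrow> (nat \<Rightarrow> int) \<Rightarrow> nat set" where
  "least_witness f w =
     (THE W. finite W \<and> witness_set f w W \<and>
        (\<forall>V. finite V \<and> witness_set f w V \<and> V \<noteq> W \<longrightarrow> wit_less W V))"

definition max_witness :: "((nat \<Rightarrow> int) \<Rightarrow> int) \<Rightarrow> (nat \<Rightarrow> int) \<Rightarrow> nat" where
  "max_witness f w = setmax (least_witness f w)"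

definition expected_max_witness_pow :: "real \<Rightarrow> ((nat \<Rightarrow> int) \<Rightarrow> int) \<Rightarrow> ennreal" where
  "expected_max_witness_pow p f = (\<integral>\<^sup>+ w. ennreal (real (max_witness f w) powr p) \<partial>Omega)"

definition p_knowable :: "real \<Rightarrow> ((nat \<Rightarrow> int) \<Rightarrow> int) \<Rightarrow> bool" where
  "p_knowable p f \<longleftrightarrow> finitary f \<and> expected_max_witness_pow p f < \<infinity>"

end

theory Submission
  imports Defs
begin

text \<open>If a finite witness set W at \<omega> avoids bit k, then flipping k does not change f at \<omega>
  (almost surely): f is almost surely constant on the cylinder of \<omega> over W, and the flip is a
  measure-preserving map of that cylinder onto itself. Hence flipping k can only change f where
  max W(f) \<ge> k, and Markov's inequality gives k^p I_k(f) \<le> E[(max W(f))^p]. The tail sum of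
  the I_k(f)^q over k > n is then dominated by E[(max W(f))^p]^q times the tail sum of k^(-pq),
  which is compared with the integral of x^(-pq) over [n, \<infinity>).\<close>

abbreviation coin :: "int measure" where
  "coin \<equiv> measure_pmf (pmf_of_set {-1, 1})"

lemma prob_space_Omega: "prob_space Omega"
  unfolding Omega_def by (intro prob_space_PiM) (simp add: prob_space_measure_pmf)

lemma space_Omega [simp]: "space Omega = UNIV"
  unfolding Omega_def by (simp add: space_PiM)

lemma measurable_flip_bit [measurable]: "flip_bit k \<in> measurable Omega Omega"
  unfolding Omega_def flip_bit_def by (rule measurable_PiM_single') auto

lemma emeasure_coin_uminus: "emeasure coin (uminus -` A) = emeasure coin A"
proof -
  have "{-1, 1} \<inter> uminus -` A = uminus ` ({-1, 1} \<inter> A)" by force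
  then have "card ({-1::int, 1} \<inter> uminus -` A) = card ({-1, 1} \<inter> A)"
    by (simp add: card_image)
  then show ?thesis by (simp add: emeasure_pmf_of_set)
qed

lemma distr_flip_bit_Omega: "distr Omega Omega (flip_bit k) = Omega"
proof -
  interpret product_prob_space "\<lambda>_. coin" UNIV by unfold_locales
  show ?thesis unfolding Omega_def
  proof (rule PiM_eq)
    fix J :: "nat set" and F :: "nat \<Rightarrow> int set"
    assume J: "finite J"
    define F' where "F' j = (if j = k then uminus -` F j else F j)" for j
    have "flip_bit k w j \<in> F j \<longleftrightarrow> w j \<in> F' j" for w j
      by (simp add: flip_bit_def F'_def)
    then have preimage: "flip_bit k -` prod_emb UNIV (\<lambda>_. coin) J (Pi\<^sub>E J F)
        = prod_emb UNIV (\<lambda>_. coin) J (Pi\<^sub>E J F')"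
      by (auto simp: prod_emb_def space_PiM PiE_iff)
    have "emeasure (distr (PiM UNIV (\<lambda>_. coin)) (PiM UNIV (\<lambda>_. coin)) (flip_bit k))
          (prod_emb UNIV (\<lambda>_. coin) J (Pi\<^sub>E J F))
        = emeasure (PiM UNIV (\<lambda>_. coin)) (prod_emb UNIV (\<lambda>_. coin) J (Pi\<^sub>E J F'))"
      using measurable_flip_bit[of k] J unfolding Omega_def
      by (subst emeasure_distr) (auto simp: preimage space_PiM intro!: sets_PiM_I)
    also have "\<dots> = (\<Prod>j\<in>J. emeasure coin (F' j))"
      using J by (subst emeasure_PiM_emb) auto
    also have "\<dots> = (\<Prod>j\<in>J. emeasure coin (F j))"
      by (intro prod.cong) (simp_all add: F'_def emeasure_coin_uminus)
    finally show "emeasure (distr (PiM UNIV (\<lambda>_. coin)) (PiM UNIV (\<lambda>_. coin)) (flip_bit k))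
          (prod_emb UNIV (\<lambda>_. coin) J (Pi\<^sub>E J F)) = (\<Prod>j\<in>J. emeasure coin (F j))" .
  qed simp
qed

lemma AE_flip_bit: "AE w in Omega. P w \<Longrightarrow> AE w in Omega. P (flip_bit k w)"
  by (rule AE_distrD[OF measurable_flip_bit]) (simp only: distr_flip_bit_Omega)

lemma AE_eq_of_witness_set:
  assumes "witness_set f w0 W"
  shows "AE w in Omega. (\<forall>i\<in>W. w i = w0 i) \<longrightarrow> f w = f w0"
proof -
  interpret prob_space Omega by (rule prob_space_Omega)
  obtain A where "measure Omega A = 1" and "\<And>w. w \<in> A \<Longrightarrow> (\<forall>i\<in>W. w i = w0 i) \<Longrightarrow> f w = f w0"
    using assms unfolding witness_set_def by blast
  then show ?thesis by (auto dest!: AE_prob_1 elim: AE_mp)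
qed

lemma AE_flip_bit_eq_outside_witness:
  assumes "witness_set f w0 W" and "k \<notin> W"
  shows "AE w in Omega. (\<forall>i\<in>W. w i = w0 i) \<longrightarrow> f (flip_bit k w) = f w"
  using AE_eq_of_witness_set[OF assms(1)] AE_flip_bit[OF AE_eq_of_witness_set[OF assms(1)], of k]
proof eventually_elim
  case (elim w)
  then show ?case using \<open>k \<notin> W\<close> by (auto simp: flip_bit_def)
qed

text \<open>There are only countably many pairs of a finite index set and a pattern on it, so the
  almost sure statements for the individual cylinders combine.\<close>
lemma AE_flip_bit_eq_finite_witness:
  "AE w in Omega. \<forall>W. finite W \<and> k \<notin> W \<and> witness_set f w W \<longrightarrow> f (flip_bit k w) = f w"
proof -
  define I where "I = (SIGMA W:{W. finite W \<and> k \<notin> W}. PiE W (\<lambda>_. UNIV :: int set))"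
  have "countable I"
    unfolding I_def
    by (intro countable_SIGMA countable_PiE countable_subset[OF _ countable_Collect_finite]) auto
  moreover have "AE w in Omega. (\<forall>i\<in>W. w i = g i) \<and> witness_set f w W \<longrightarrow> f (flip_bit k w) = f w"
    if "(W, g) \<in> I" for W g
  proof (cases "\<exists>w0. (\<forall>i\<in>W. w0 i = g i) \<and> witness_set f w0 W")
    case True
    then obtain w0 where "\<forall>i\<in>W. w0 i = g i" and "witness_set f w0 W" by blast
    with AE_flip_bit_eq_outside_witness[of f w0 W k] that show ?thesis
      by (auto simp: I_def elim!: AE_mp)
  next
    case False
    then show ?thesis by (intro AE_I2) blast
  qed
  ultimately have "AE w in Omega. \<forall>(W, g)\<in>I.
      (\<forall>i\<in>W. w i = g i) \<and> witness_set f w W \<longrightarrow> f (flip_bit k w) = f w"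
    by (auto simp: AE_ball_countable)
  then show ?thesis
  proof eventually_elim
    case (elim w)
    show ?case
    proof (intro allI impI)
      fix W assume W: "finite W \<and> k \<notin> W \<and> witness_set f w W"
      then have "(W, restrict w W) \<in> I" by (simp add: I_def)
      with elim W show "f (flip_bit k w) = f w" by fastforce
    qed
  qed
qed

lemma le_setmax: "finite W \<Longrightarrow> i \<in> W \<Longrightarrow> i \<le> setmax W"
  by (auto simp: setmax_def)

lemma wit_less_irrefl: "\<not> wit_less V V"
  unfolding wit_less_def using lexord_irreflexive[of "{(x::nat, y). x < y}"] by auto

lemma wit_less_trans: "wit_less U V \<Longrightarrow> wit_less V W \<Longrightarrow> wit_less U W"
proof -
  have "trans (lexord {(x::nat, y). x < y})"
    by (intro lexord_transI) (auto simp: trans_def)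
  then show "wit_less U V \<Longrightarrow> wit_less V W \<Longrightarrow> wit_less U W"
    unfolding wit_less_def by (elim disjE conjE; simp) (meson transD)
qed

lemma wit_less_linear:
  assumes "finite V" "finite W" "V \<noteq> W"
  shows "wit_less V W \<or> wit_less W V"
proof -
  have "sorted_list_of_set V \<noteq> sorted_list_of_set W"
    using assms by (metis sorted_list_of_set.set_sorted_key_list_of_set)
  then have "(sorted_list_of_set V, sorted_list_of_set W) \<in> lexord {(x, y). x < y} \<or>
      (sorted_list_of_set W, sorted_list_of_set V) \<in> lexord {(x, y). x < y}"
    using lexord_linear[of "{(x::nat, y). x < y}"] by force
  then show ?thesis
    unfolding wit_less_def by (cases "setmax V = setmax W"; cases "card V = card W") auto
qed

lemma ex_wit_less_least:
  assumes "finite S" "S \<noteq> {}" "\<forall>W\<in>S. finite W"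
  shows "\<exists>W\<in>S. \<forall>V\<in>S. V \<noteq> W \<longrightarrow> wit_less W V"
  using assms
proof (induction S rule: finite_ne_induct)
  case (insert U S)
  then obtain W where "W \<in> S" and W: "\<And>V. V \<in> S \<Longrightarrow> V \<noteq> W \<Longrightarrow> wit_less W V" by auto
  show ?case
  proof (cases "wit_less U W")
    case True
    have "wit_less U V" if "V \<in> S" for V
      using True W[OF that] wit_less_trans[OF True] by (cases "V = W") auto
    then show ?thesis by blast
  next
    case False
    with wit_less_linear[of U W] insert.prems \<open>W \<in> S\<close> have "U = W \<or> wit_less W U" by auto
    then show ?thesis using W \<open>W \<in> S\<close> by blast
  qed
qed simp

text \<open>Only finitely many finite sets have a given maximum, so the order has a least witness
  among the witnesses of least maximum, and it beats every other witness.\<close>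
lemma least_witness:
  assumes "\<exists>W. finite W \<and> witness_set f w W"
  shows "finite (least_witness f w) \<and> witness_set f w (least_witness f w)"
proof -
  define S where "S = {W. finite W \<and> witness_set f w W}"
  from assms obtain W where "W \<in> S" by (auto simp: S_def)
  then obtain W1 where "W1 \<in> S" and W1: "\<forall>V\<in>S. setmax W1 \<le> setmax V"
    using ex_has_least_nat[of "\<lambda>V. V \<in> S" W setmax] by auto
  define Sm where "Sm = {V \<in> S. setmax V = setmax W1}"
  have "Sm \<subseteq> Pow {0..setmax W1}"
    unfolding Sm_def S_def using le_setmax by fastforce
  then have "finite Sm" by (rule finite_subset) simp
  then obtain W0 where "W0 \<in> Sm" and W0: "\<forall>V\<in>Sm. V \<noteq> W0 \<longrightarrow> wit_less W0 V"
    using ex_wit_less_least[of Sm] \<open>W1 \<in> S\<close> unfolding Sm_def S_def by blast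
  have least: "W0 \<in> S \<and> (\<forall>V\<in>S. V \<noteq> W0 \<longrightarrow> wit_less W0 V)"
  proof (intro conjI ballI impI)
    show "W0 \<in> S" using \<open>W0 \<in> Sm\<close> by (simp add: Sm_def)
    fix V assume "V \<in> S" "V \<noteq> W0"
    show "wit_less W0 V"
    proof (cases "V \<in> Sm")
      case False
      then have "setmax W0 < setmax V"
        using W1 \<open>V \<in> S\<close> \<open>W0 \<in> Sm\<close> unfolding Sm_def by fastforce
      then show ?thesis by (simp add: wit_less_def)
    qed (use W0 \<open>V \<noteq> W0\<close> in blast)
  qed
  have "least_witness f w = W0"
    unfolding least_witness_def
  proof (rule the_equality)
    fix W
    assume W: "finite W \<and> witness_set f w W \<and>
      (\<forall>V. finite V \<and> witness_set f w V \<and> V \<noteq> W \<longrightarrow> wit_less W V)"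
    show "W = W0"
    proof (rule ccontr)
      assume "W \<noteq> W0"
      then have "wit_less W W0" and "wit_less W0 W"
        using W least by (auto simp: S_def)
      then show False using wit_less_trans wit_less_irrefl by metis
    qed
  qed (use least in \<open>auto simp: S_def\<close>)
  then show ?thesis using least by (simp add: S_def)
qed

lemma AE_flip_bit_neq_imp_le_max_witness:
  assumes "finitary f"
  shows "AE w in Omega. f (flip_bit k w) \<noteq> f w \<longrightarrow> k \<le> max_witness f w"
  using AE_flip_bit_eq_finite_witness[of k f] assms unfolding finitary_def
proof eventually_elim
  case (elim w)
  then have "finite (least_witness f w)" and "witness_set f w (least_witness f w)"
    using least_witness by blast+
  with elim(1) show ?case
    unfolding max_witness_def using le_setmax by blast
qed

lemma sets_flip_bit_neq:
  assumes "boolean_function f"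
  shows "{w \<in> space Omega. f (flip_bit k w) \<noteq> f w} \<in> sets Omega"
proof -
  have [measurable]: "f \<in> measurable Omega (count_space UNIV)"
    using assms by (simp add: boolean_function_def)
  show ?thesis by measurable
qed

lemma powr_mult_influence_le:
  assumes f: "boolean_function f" and "p_knowable p f" and "p \<ge> 0"
  shows "real k powr p * influence f k \<le> enn2real (expected_max_witness_pow p f)"
proof -
  interpret prob_space Omega by (rule prob_space_Omega)
  define E where "E = {w \<in> space Omega. f (flip_bit k w) \<noteq> f w}"
  have E: "E \<in> sets Omega" unfolding E_def using f by (rule sets_flip_bit_neq)
  have "finitary f" and finite_moment: "expected_max_witness_pow p f < \<infinity>"
    using \<open>p_knowable p f\<close> by (auto simp: p_knowable_def)
  have "ennreal (real k powr p) * emeasure Omega E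
      = (\<integral>\<^sup>+ w. ennreal (real k powr p) * indicator E w \<partial>Omega)"
    using E by (simp add: nn_integral_cmult_indicator)
  also have "\<dots> \<le> expected_max_witness_pow p f"
    unfolding expected_max_witness_pow_def
    using AE_flip_bit_neq_imp_le_max_witness[OF \<open>finitary f\<close>, of k]
  proof (intro nn_integral_mono_AE, eventually_elim)
    case (elim w)
    then have "w \<in> E \<Longrightarrow> real k powr p \<le> real (max_witness f w) powr p"
      using \<open>p \<ge> 0\<close> by (intro powr_mono2) (auto simp: E_def)
    then show ?case by (simp add: indicator_def)
  qed
  finally have "ennreal (real k powr p * influence f k) \<le> expected_max_witness_pow p f"
    by (simp add: influence_def E_def emeasure_eq_measure ennreal_mult)
  then show ?thesis
    using finite_moment enn2real_mono[of "ennreal (real k powr p * influence f k)"]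
    by (simp add: influence_def)
qed

lemma powr_minus_le_diff_powr:
  fixes y s :: real
  assumes "y > 0" and "s > 1"
  shows "(y + 1) powr (- s) \<le> (y powr (1 - s) - (y + 1) powr (1 - s)) / (s - 1)"
proof -
  have "((\<lambda>t. t powr (1 - s)) has_real_derivative (1 - s) * x powr (1 - s - 1)) (at x)"
    if "y \<le> x" for x
    using that \<open>y > 0\<close> by (intro has_real_derivative_powr) auto
  then obtain z where z: "y < z" "z < y + 1"
    and mvt: "(y + 1) powr (1 - s) - y powr (1 - s) = (y + 1 - y) * ((1 - s) * z powr (1 - s - 1))"
    using MVT2[of y "y + 1" "\<lambda>t. t powr (1 - s)" "\<lambda>t. (1 - s) * t powr (1 - s - 1)"] by auto
  have "(y + 1) powr (- s) \<le> z powr (- s)"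
    using z \<open>y > 0\<close> \<open>s > 1\<close> by (intro powr_mono2') auto
  also have "\<dots> = (y powr (1 - s) - (y + 1) powr (1 - s)) / (s - 1)"
    using mvt \<open>s > 1\<close> by (simp add: field_simps)
  finally show ?thesis .
qed

lemma summable_powr_tail_le:
  fixes s :: real
  assumes "s > 1" and "n \<ge> 1"
  shows "summable (\<lambda>j. real (n + 1 + j) powr (- s)) \<and>
    (\<Sum>j. real (n + 1 + j) powr (- s)) \<le> real n powr (1 - s) / (s - 1)"
proof -
  define b where "b j = real (n + j) powr (1 - s) / (s - 1)" for j
  have term_le: "real (n + 1 + j) powr (- s) \<le> b j - b (Suc j)" for j
    using powr_minus_le_diff_powr[of "real (n + j)" s] assms
    by (simp add: b_def diff_divide_distrib add_ac)
  have "filterlim (\<lambda>j. real (n + j)) at_top sequentially"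
    by (rule filterlim_subseq[THEN filterlim_compose[OF filterlim_real_sequentially]])
      (simp add: strict_mono_def)
  then have "b \<longlonglongrightarrow> 0"
    unfolding b_def using \<open>s > 1\<close> by (intro tendsto_divide_zero tendsto_neg_powr) auto
  then have telescope: "(\<lambda>j. b j - b (Suc j)) sums b 0"
    using telescope_sums'[of b 0] by simp
  have summable: "summable (\<lambda>j. real (n + 1 + j) powr (- s))"
    using term_le by (intro summable_comparison_test'[OF sums_summable[OF telescope]]) auto
  have "(\<Sum>j. real (n + 1 + j) powr (- s)) \<le> (\<Sum>j. b j - b (Suc j))"
    using term_le summable sums_summable[OF telescope] by (intro suminf_le) auto
  also have "\<dots> = real n powr (1 - s) / (s - 1)"
    using sums_unique[OF telescope] by (simp add: b_def)
  finally show ?thesis using summable by blast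
qed

lemma summable_tail_powr_le:
  fixes a :: "nat \<Rightarrow> real" and e p q :: real
  assumes a_nonneg: "\<And>k. a k \<ge> 0" and bound: "\<And>k. k \<ge> 1 \<Longrightarrow> real k powr p * a k \<le> e"
    and "q > 0" and "p * q > 1" and "n \<ge> 1"
  shows "summable (\<lambda>j. a (n + 1 + j) powr q) \<and>
    (\<Sum>j. a (n + 1 + j) powr q) \<le> e powr q * (real n powr (1 - p * q) / (p * q - 1))"
proof -
  have "e \<ge> 0" using bound[of 1] a_nonneg[of 1] by simp
  have term_le: "a (n + 1 + j) powr q \<le> e powr q * real (n + 1 + j) powr (- (p * q))" for j
  proof -
    define x where "x = real (n + 1 + j)"
    have "x > 0" by (simp add: x_def)
    have "a (n + 1 + j) = (x powr p * a (n + 1 + j)) * x powr (- p)"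
      using \<open>x > 0\<close> by (simp add: powr_minus field_simps)
    also have "\<dots> \<le> e * x powr (- p)"
      using bound[of "n + 1 + j"] by (intro mult_right_mono) (auto simp: x_def)
    finally have "a (n + 1 + j) powr q \<le> (e * x powr (- p)) powr q"
      using a_nonneg \<open>q > 0\<close> by (intro powr_mono2) auto
    also have "\<dots> = e powr q * x powr (- (p * q))"
      using \<open>e \<ge> 0\<close> by (simp add: powr_mult powr_powr)
    finally show ?thesis by (simp add: x_def)
  qed
  obtain summable_tail: "summable (\<lambda>j. real (n + 1 + j) powr (- (p * q)))"
    and tail_le: "(\<Sum>j. real (n + 1 + j) powr (- (p * q))) \<le> real n powr (1 - p * q) / (p * q - 1)"
    using summable_powr_tail_le[of "p * q" n] assms by blast
  have summable: "summable (\<lambda>j. a (n + 1 + j) powr q)"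
    using term_le by (intro summable_comparison_test'[OF summable_mult[OF summable_tail]]) auto
  have "(\<Sum>j. a (n + 1 + j) powr q) \<le> (\<Sum>j. e powr q * real (n + 1 + j) powr (- (p * q)))"
    using term_le summable summable_mult[OF summable_tail] by (intro suminf_le) auto
  also have "\<dots> = e powr q * (\<Sum>j. real (n + 1 + j) powr (- (p * q)))"
    using summable_tail by (rule suminf_mult)
  also have "\<dots> \<le> e powr q * (real n powr (1 - p * q) / (p * q - 1))"
    using tail_le by (intro mult_left_mono) auto
  finally show ?thesis using summable by blast
qed

theorem mainTheorem12:
  fixes p q :: real and f :: "(nat \<Rightarrow> int) \<Rightarrow> int"
  assumes "p > 0" and "boolean_function f" and "p_knowable p f"
    and "q > 0" and "p * q > 1"
  shows "(\<forall>n::nat. n \<ge> 1 \<longrightarrow>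
            summable (\<lambda>k. influence f (n + 1 + k) powr q) \<and>
            (\<Sum>k. influence f (n + 1 + k) powr q)
              \<le> enn2real (expected_max_witness_pow p f) powr q
                 * (real n powr (1 - p * q) / (p * q - 1)))
         \<and> (p > 1/2 \<longrightarrow> summable (\<lambda>k. (influence f k)\<^sup>2))"
proof -
  have nonneg: "influence f k \<ge> 0" for k by (simp add: influence_def)
  note tail_bound = summable_tail_powr_le[OF nonneg powr_mult_influence_le[OF assms(2,3) less_imp_le[OF assms(1)]]]
  have "summable (\<lambda>k. (influence f k)\<^sup>2)" if "p > 1/2"
  proof -
    have "summable (\<lambda>j. (influence f (j + 2))\<^sup>2)"
      using tail_bound[of 2 1] that nonneg by (simp add: add.commute)
    then show ?thesis by (rule iffD1[OF summable_iff_shift])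
  qed
  then show ?thesis using tail_bound[OF assms(4,5)] by blast
qed

end
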